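(* Consider a Fisher market with agents $N$, budgets $b_i>0$ for $i\in N$, indivisible items $M$, and monotone preferences $\preceq_i$. For every competitive equilibrium $(\mathcal S,p)$ such that $S_i\ne\emptyset$ for every $i\in N$, there exists a price vector $p'$ such that $(\mathcal S,p')$ is a competitive equilibrium and $p'$ is budget-exhausting, i.e., $p'(S_i)=b_i$ for every $i\in N$.
   Context: A monotone preference $\preceq_i$ is a complete and transitive weak order over all subsets of $M$ such that $S\preceq_i T$ whenever $S\subseteq T$; $S\prec_i T$ means $S\preceq_i T$ and not $T\preceq_i S$. For prices $p$, $p(S)=\sum_{j\in S}p_j$. A bundle $S$ is demanded by agent $i$ if $p(S)\le b_i$ and $p(T)>b_i$ for every $T$ with $S\prec_i T$. A competitive equilibrium is a pair $(\mathcal S,p)$ with $\mathcal S=(S_i)_{i\in N}$ a partition of all of $M$ among the agents such that each $S_i$ is demanded by agent $i$ at prices $p$. *)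

theory Defs
  imports Complex_Main
begin

text \<open>A preference of an agent is a binary relation on bundles (subsets of the item set M);
  R S T reads: S is weakly less preferred than T.\<close>

definition monotone_pref :: "'b set \<Rightarrow> ('b set \<Rightarrow> 'b set \<Rightarrow> bool) \<Rightarrow> bool" where
  "monotone_pref M R \<longleftrightarrow>
     (\<forall>S T. S \<subseteq> M \<longrightarrow> T \<subseteq> M \<longrightarrow> R S T \<or> R T S) \<and>
     (\<forall>S T U. S \<subseteq> M \<longrightarrow> T \<subseteq> M \<longrightarrow> U \<subseteq> M \<longrightarrow> R S T \<longrightarrow> R T U \<longrightarrow> R S U) \<and>
     (\<forall>S T. S \<subseteq> T \<longrightarrow> T \<subseteq> M \<longrightarrow> R S T)"

definition strict_pref :: "('b set \<Rightarrow> 'b set \<Rightarrow> bool) \<Rightarrow> 'b set \<Rightarrow> 'b set \<Rightarrow> bool" where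
  "strict_pref R S T \<longleftrightarrow> R S T \<and> \<not> R T S"

definition price :: "('b \<Rightarrow> real) \<Rightarrow> 'b set \<Rightarrow> real" where
  "price p S = (\<Sum>j\<in>S. p j)"

definition demanded :: "'b set \<Rightarrow> ('b set \<Rightarrow> 'b set \<Rightarrow> bool) \<Rightarrow> real \<Rightarrow> ('b \<Rightarrow> real) \<Rightarrow> 'b set \<Rightarrow> bool" where
  "demanded M R bi p S \<longleftrightarrow> S \<subseteq> M \<and> price p S \<le> bi \<and>
     (\<forall>T. T \<subseteq> M \<longrightarrow> strict_pref R S T \<longrightarrow> price p T > bi)"

definition is_allocation :: "'a set \<Rightarrow> 'b set \<Rightarrow> ('a \<Rightarrow> 'b set) \<Rightarrow> bool" where
  "is_allocation N M S \<longleftrightarrow> (\<Union>i\<in>N. S i) = M \<and>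
     (\<forall>i\<in>N. \<forall>j\<in>N. i \<noteq> j \<longrightarrow> S i \<inter> S j = {})"

definition competitive_equilibrium ::
  "'a set \<Rightarrow> 'b set \<Rightarrow> ('a \<Rightarrow> 'b set \<Rightarrow> 'b set \<Rightarrow> bool) \<Rightarrow> ('a \<Rightarrow> real) \<Rightarrow> ('a \<Rightarrow> 'b set) \<Rightarrow> ('b \<Rightarrow> real) \<Rightarrow> bool" where
  "competitive_equilibrium N M pref b S p \<longleftrightarrow> is_allocation N M S \<and>
     (\<forall>i\<in>N. demanded M (pref i) (b i) p (S i))"

end

theory Submission
  imports Defs
begin

text \<open>Raising prices can only make bundles less affordable, so a bundle that was demanded
  stays demanded as long as it remains affordable itself. Spreading each agent's unspent budget
  evenly over the items of her bundle (nonempty, and disjoint from the other bundles) therefore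
  keeps the equilibrium and exhausts every budget.\<close>

lemma price_mono:
  assumes "\<forall>j\<in>T. p j \<le> p' j"
  shows "price p T \<le> price p' T"
  unfolding price_def using assms by (intro sum_mono) auto

lemma demanded_raise_prices:
  assumes "demanded M R bi p S"
    and "\<forall>j\<in>M. p j \<le> p' j"
    and "price p' S \<le> bi"
  shows "demanded M R bi p' S"
  unfolding demanded_def
proof (intro conjI allI impI)
  show "S \<subseteq> M" "price p' S \<le> bi"
    using assms(1,3) unfolding demanded_def by auto
  fix T assume T: "T \<subseteq> M" "strict_pref R S T"
  then have "bi < price p T"
    using assms(1) unfolding demanded_def by blast
  also have "\<dots> \<le> price p' T"
    using T(1) assms(2) by (intro price_mono) auto
  finally show "bi < price p' T" .
qed

definition spread_surplus ::
  "'a set \<Rightarrow> ('a \<Rightarrow> 'b set) \<Rightarrow> ('a \<Rightarrow> real) \<Rightarrow> ('b \<Rightarrow> real) \<Rightarrow> 'b \<Rightarrow> real" where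
  "spread_surplus N S b p j =
     p j + (\<Sum>i\<in>N. if j \<in> S i then (b i - price p (S i)) / card (S i) else 0)"

lemma spread_surplus_ge:
  assumes "\<forall>i\<in>N. price p (S i) \<le> b i"
  shows "p j \<le> spread_surplus N S b p j"
  unfolding spread_surplus_def using assms by (auto intro!: sum_nonneg)

lemma spread_surplus_on_bundle:
  assumes "finite N" and "\<forall>i\<in>N. \<forall>k\<in>N. i \<noteq> k \<longrightarrow> S i \<inter> S k = {}"
    and "i \<in> N" and "j \<in> S i"
  shows "spread_surplus N S b p j = p j + (b i - price p (S i)) / card (S i)"
proof -
  have "(\<Sum>k\<in>N. if j \<in> S k then (b k - price p (S k)) / card (S k) else 0)
      = (\<Sum>k\<in>N. if k = i then (b i - price p (S i)) / card (S i) else 0)"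
    using assms(2-4) by (intro sum.cong) auto
  also have "\<dots> = (b i - price p (S i)) / card (S i)"
    using assms(1,3) by simp
  finally show ?thesis
    unfolding spread_surplus_def by simp
qed

lemma price_spread_surplus_bundle:
  assumes "finite N" and "\<forall>i\<in>N. \<forall>k\<in>N. i \<noteq> k \<longrightarrow> S i \<inter> S k = {}"
    and "i \<in> N" and "finite (S i)" and "S i \<noteq> {}"
  shows "price (spread_surplus N S b p) (S i) = b i"
proof -
  have "card (S i) > 0"
    using assms(4,5) by (simp add: card_gt_0_iff)
  have "price (spread_surplus N S b p) (S i)
      = (\<Sum>j\<in>S i. p j + (b i - price p (S i)) / card (S i))"
    using spread_surplus_on_bundle[OF assms(1-3)]
    by (simp add: price_def[of "spread_surplus N S b p"])
  also have "\<dots> = price p (S i) + (b i - price p (S i))"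
    using \<open>card (S i) > 0\<close> by (simp add: sum.distrib price_def)
  finally show ?thesis by simp
qed

theorem mainTheorem6:
  fixes N :: "'a set" and M :: "'b set"
    and pref :: "'a \<Rightarrow> 'b set \<Rightarrow> 'b set \<Rightarrow> bool"
    and b :: "'a \<Rightarrow> real" and S :: "'a \<Rightarrow> 'b set" and p :: "'b \<Rightarrow> real"
  assumes "finite N" and "finite M"
    and "\<forall>i\<in>N. b i > 0"
    and "\<forall>i\<in>N. monotone_pref M (pref i)"
    and "competitive_equilibrium N M pref b S p"
    and "\<forall>i\<in>N. S i \<noteq> {}"
  shows "\<exists>p'. competitive_equilibrium N M pref b S p' \<and> (\<forall>i\<in>N. price p' (S i) = b i)"
proof -
  have alloc: "is_allocation N M S" and dem: "\<forall>i\<in>N. demanded M (pref i) (b i) p (S i)"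
    using assms(5) unfolding competitive_equilibrium_def by auto
  have disj: "\<forall>i\<in>N. \<forall>k\<in>N. i \<noteq> k \<longrightarrow> S i \<inter> S k = {}"
    using alloc unfolding is_allocation_def by blast
  have fin: "\<forall>i\<in>N. finite (S i)"
    using dem assms(2) unfolding demanded_def by (blast intro: finite_subset)
  define p' where "p' = spread_surplus N S b p"
  have exhausted: "\<forall>i\<in>N. price p' (S i) = b i"
    unfolding p'_def using price_spread_surplus_bundle[OF assms(1) disj] fin assms(6) by blast
  have "\<forall>j. p j \<le> p' j"
    unfolding p'_def using dem by (auto intro: spread_surplus_ge simp: demanded_def)
  then have "\<forall>i\<in>N. demanded M (pref i) (b i) p' (S i)"
    using dem exhausted by (auto intro: demanded_raise_prices)
  then show ?thesis
    using alloc exhausted unfolding competitive_equilibrium_def by blast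
qed

end
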